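(* Let $c,d,d_1,d_2\in\mathbb{Z}$ and $T=T(c,d,d_1,d_2)$, i.e. $T_{r,k}=c+kd_1+rd_2+rkd$ for all $r,k\ge 0$. Then $$T_{r,k}=T_{r-1,k}+T_{r,k-1}-T_{r-2,k-1}-T_{r-2,k-2}+T_{r-3,k-2}\quad\text{for } r\ge 3,\ k\ge 2;$$ $$T_{r,k}=T_{r,k-1}+T_{r-1,k-1}-T_{r-2,k-2}-T_{r-2,k-3}+T_{r-3,k-3}\quad\text{for } r,k\ge 3;$$ $$T_{r,k}=T_{r-1,k}+T_{r-1,k-1}-T_{r-2,k-2}-T_{r-3,k-2}+T_{r-3,k-3}\quad\text{for } r,k\ge 3.$$
   Context: A number triangle is an array of integers $T_{r,k}$ indexed by integers $r,k\ge 0$. For $c,d,d_1,d_2\in\mathbb{Z}$, the Generalized Rascal Triangle $T(c,d,d_1,d_2)$ is the number triangle with $T_{r,k}=c+kd_1+rd_2+rkd$. *)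

theory Defs
  imports Main
begin

definition rascal :: "int \<Rightarrow> int \<Rightarrow> int \<Rightarrow> int \<Rightarrow> nat \<Rightarrow> nat \<Rightarrow> int" where
  "rascal c d d1 d2 r k = c + int k * d1 + int r * d2 + int r * int k * d"

end

theory Submission
  imports Defs
begin

(* T r k is affine in r and in k, i.e. a combination of 1, r, k and r k; each recurrence
   is a linear relation whose coefficients annihilate all four of these monomials.
   The recurrences are stated with shifted indices, so no truncated subtraction occurs. *)

lemma rascal_recurrence_up_left:
  "rascal c d d1 d2 (r + 3) (k + 2) =
     rascal c d d1 d2 (r + 2) (k + 2) + rascal c d d1 d2 (r + 3) (k + 1)
     - rascal c d d1 d2 (r + 1) (k + 1) - rascal c d d1 d2 (r + 1) k + rascal c d d1 d2 r k"
  by (simp add: rascal_def algebra_simps)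

lemma rascal_recurrence_left_diag:
  "rascal c d d1 d2 (r + 3) (k + 3) =
     rascal c d d1 d2 (r + 3) (k + 2) + rascal c d d1 d2 (r + 2) (k + 2)
     - rascal c d d1 d2 (r + 1) (k + 1) - rascal c d d1 d2 (r + 1) k + rascal c d d1 d2 r k"
  by (simp add: rascal_def algebra_simps)

lemma rascal_recurrence_up_diag:
  "rascal c d d1 d2 (r + 3) (k + 3) =
     rascal c d d1 d2 (r + 2) (k + 3) + rascal c d d1 d2 (r + 2) (k + 2)
     - rascal c d d1 d2 (r + 1) (k + 1) - rascal c d d1 d2 r (k + 1) + rascal c d d1 d2 r k"
  by (simp add: rascal_def algebra_simps)

theorem mainTheorem11:
  fixes c d d1 d2 :: int
  defines "T \<equiv> rascal c d d1 d2"
  shows "(\<forall>r k. r \<ge> 3 \<and> k \<ge> 2 \<longrightarrow>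
            T r k = T (r-1) k + T r (k-1) - T (r-2) (k-1) - T (r-2) (k-2) + T (r-3) (k-2))
       \<and> (\<forall>r k. r \<ge> 3 \<and> k \<ge> 3 \<longrightarrow>
            T r k = T r (k-1) + T (r-1) (k-1) - T (r-2) (k-2) - T (r-2) (k-3) + T (r-3) (k-3))
       \<and> (\<forall>r k. r \<ge> 3 \<and> k \<ge> 3 \<longrightarrow>
            T r k = T (r-1) k + T (r-1) (k-1) - T (r-2) (k-2) - T (r-3) (k-2) + T (r-3) (k-3))"
proof (intro conjI allI impI)
  fix r k :: nat
  assume "r \<ge> 3 \<and> k \<ge> 2"
  then obtain a b where "r = a + 3" "k = b + 2"
    by (metis le_add_diff_inverse2)
  then show "T r k = T (r-1) k + T r (k-1) - T (r-2) (k-1) - T (r-2) (k-2) + T (r-3) (k-2)"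
    using rascal_recurrence_up_left[of c d d1 d2 a b] by (simp add: T_def)
next
  fix r k :: nat
  assume "r \<ge> 3 \<and> k \<ge> 3"
  then obtain a b where "r = a + 3" "k = b + 3"
    by (metis le_add_diff_inverse2)
  then show "T r k = T r (k-1) + T (r-1) (k-1) - T (r-2) (k-2) - T (r-2) (k-3) + T (r-3) (k-3)"
    using rascal_recurrence_left_diag[of c d d1 d2 a b] by (simp add: T_def)
next
  fix r k :: nat
  assume "r \<ge> 3 \<and> k \<ge> 3"
  then obtain a b where "r = a + 3" "k = b + 3"
    by (metis le_add_diff_inverse2)
  then show "T r k = T (r-1) k + T (r-1) (k-1) - T (r-2) (k-2) - T (r-3) (k-2) + T (r-3) (k-3)"
    using rascal_recurrence_up_diag[of c d d1 d2 a b] by (simp add: T_def)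
qed

end
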